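(* Let $q$ be a prime power and let $n,k,r$ be integers with $n\le q-1$, $0<r<k\le n$, $r\mid k$, $(r+1)\mid n$ and $(r+1)\mid(q-1)$. Write $m=k/r$ and $n=(m+\ell)(r+1)$ with an integer $\ell\ge 0$, so that $t:=n-k-m=\ell(r+1)$. Let $\omega$ be a primitive element of $\mathbb F_q$ and $\alpha=\omega^{(q-1)/(r+1)}$. For $0\le i\le m+\ell-1$ and $j\ge 0$ let $$\mathbf v^{(j)}_i=\big((\omega^i)^j,(\omega^i\alpha)^j,\dots,(\omega^i\alpha^r)^j\big)\in\mathbb F_q^{r+1},$$ and let $\mathbf V^{(j)}=(\mathbf v^{(j)}_0,\dots,\mathbf v^{(j)}_{m+\ell-1})\in\mathbb F_q^n$. Let $\mathbf H$ be the $(m+\ell+\ell r)\times n$ matrix whose rows are: - the $m+\ell$ vectors $\mathbf e_b\in\mathbb F_q^n$ ($0\le b\le m+\ell-1$), where $\mathbf e_b$ has entries $1$ in coordinates $b(r+1),\dots,b(r+1)+r$ and $0$ elsewhere; - the $\ell r$ vectors $\mathbf V^{(j)}$ for $1\le j\le \ell(r+1)-1$ with $(r+1)\nmid j$. Then $\mathbf H$ has full rank $m+\ell+\ell r$. Moreover, the code $\mathcal C=\{\mathbf c\in\mathbb F_q^n:\mathbf H\mathbf c^{T}=\mathbf 0\}$ is a linear $[n,k,t+2]$ code. For every codeword $\mathbf c$ and every $b$, the sum of the coordinates of $\mathbf c$ in the group $\{b(r+1),\dots,b(r+1)+r\}$ is $0$; hence $\mathcal C$ has addition based repair and all-symbol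 locality $r$.
   Context: A linear code has addition based repair if every coordinate (node) $i$ has a set $J_i$ of other coordinates with $c_i=-\sum_{j\in J_i}c_j$ for all codewords $\mathbf c$. It has all-symbol locality $r$ if every node can be recovered, for all codewords, as a function of at most $r$ other nodes. *)

theory Defs
  imports Main HOL.Vector_Spaces "HOL-Library.Function_Algebras" "HOL-Library.Cardinality"
begin

text \<open>Vectors of F_q^n are represented as functions nat => 'a that vanish outside {0..<n}.\<close>

definition fscale :: "'a::field \<Rightarrow> (nat \<Rightarrow> 'a) \<Rightarrow> (nat \<Rightarrow> 'a)" where
  "fscale c v = (\<lambda>i. c * v i)"

definition vdim :: "(nat \<Rightarrow> 'a::field) set \<Rightarrow> nat" where
  "vdim S = vector_space.dim fscale S"

definition vsubspace :: "(nat \<Rightarrow> 'a::field) set \<Rightarrow> bool" where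
  "vsubspace S = module.subspace fscale S"

definition hweight :: "nat \<Rightarrow> (nat \<Rightarrow> 'a::zero) \<Rightarrow> nat" where
  "hweight n c = card {i. i < n \<and> c i \<noteq> 0}"

definition min_dist :: "nat \<Rightarrow> (nat \<Rightarrow> 'a::zero) set \<Rightarrow> nat" where
  "min_dist n C = Min {hweight n c | c. c \<in> C \<and> c \<noteq> 0}"

definition linear_code :: "nat \<Rightarrow> nat \<Rightarrow> nat \<Rightarrow> (nat \<Rightarrow> 'a::field) set \<Rightarrow> bool" where
  "linear_code n k d C \<longleftrightarrow>
     vsubspace C \<and> (\<forall>c\<in>C. \<forall>i\<ge>n. c i = 0) \<and> vdim C = k \<and> min_dist n C = d"

definition addition_based_repair :: "nat \<Rightarrow> (nat \<Rightarrow> 'a::ab_group_add) set \<Rightarrow> bool" where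
  "addition_based_repair n C \<longleftrightarrow>
     (\<forall>i<n. \<exists>J. J \<subseteq> {..<n} - {i} \<and> (\<forall>c\<in>C. c i = - (\<Sum>j\<in>J. c j)))"

definition all_symbol_locality :: "nat \<Rightarrow> nat \<Rightarrow> (nat \<Rightarrow> 'a::zero) set \<Rightarrow> bool" where
  "all_symbol_locality n r C \<longleftrightarrow>
     (\<forall>i<n. \<exists>R f. R \<subseteq> {..<n} - {i} \<and> card R \<le> r \<and>
        (\<forall>c\<in>C. c i = f (\<lambda>j. if j \<in> R then c j else 0)))"

definition primitive_elem :: "'a::{finite,field} \<Rightarrow> bool" where
  "primitive_elem w \<longleftrightarrow> (\<forall>x. x \<noteq> 0 \<longrightarrow> (\<exists>i::nat. x = w ^ i))"

text \<open>The row vectors of H. Coordinate p = i(r+1)+s corresponds to evaluation point w^i alpha^s.\<close>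
definition Vrow :: "'a::field \<Rightarrow> 'a \<Rightarrow> nat \<Rightarrow> nat \<Rightarrow> nat \<Rightarrow> (nat \<Rightarrow> 'a)" where
  "Vrow w a r n j = (\<lambda>p. if p < n then (w ^ (p div (r+1)) * a ^ (p mod (r+1))) ^ j else 0)"

definition erow :: "nat \<Rightarrow> nat \<Rightarrow> nat \<Rightarrow> (nat \<Rightarrow> 'a::{zero,one})" where
  "erow r n b = (\<lambda>p. if p < n \<and> b*(r+1) \<le> p \<and> p \<le> b*(r+1) + r then 1 else 0)"

definition Hrows :: "'a::field \<Rightarrow> 'a \<Rightarrow> nat \<Rightarrow> nat \<Rightarrow> nat \<Rightarrow> nat \<Rightarrow> (nat \<Rightarrow> 'a) list" where
  "Hrows w a r n m l =
     map (erow r n) [0..<m+l] @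
     map (Vrow w a r n) (filter (\<lambda>j. \<not> (r+1) dvd j) [1..<l*(r+1)])"

definition code_of :: "nat \<Rightarrow> (nat \<Rightarrow> 'a::comm_ring) list \<Rightarrow> (nat \<Rightarrow> 'a) set" where
  "code_of n H = {c. (\<forall>i\<ge>n. c i = 0) \<and> (\<forall>h\<in>set H. (\<Sum>i<n. h i * c i) = 0)}"

end

theory Submission
  imports Defs "HOL-Computational_Algebra.Polynomial"
begin

(*
  Every codeword sums to zero on each block of r + 1 consecutive coordinates, and on a
  block the powers x^j of the evaluation points x = w^i alpha^s do not depend on s when
  (r + 1) | j, because alpha^(r+1) = 1. Together with the rows V^(j) this gives
  sum_p c_p x_p^j = 0 for all 0 <= j <= t at pairwise distinct points, so a Vandermonde
  argument shows that every nonzero codeword has weight at least t + 2.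

  The code has codimension at most the number m + l + l r of rows of H. Conversely, a
  codeword vanishing on the k coordinates of the first m blocks other than their last
  ones vanishes on these blocks by the block sums, so has weight at most t and is zero;
  hence dim C = k and H has full rank. Prescribing zeros on only k - 1 such coordinates
  leaves a nonzero codeword of weight at most t + 2. Each coordinate is minus the sum of
  the other coordinates of its block, which gives repair and locality.
*)

section \<open>Dimension counting in \<open>F\<^sup>n\<close>\<close>

interpretation V: vector_space "fscale :: 'a::field \<Rightarrow> (nat \<Rightarrow> 'a) \<Rightarrow> (nat \<Rightarrow> 'a)"
  by unfold_locales (auto simp: fscale_def fun_eq_iff algebra_simps)

lemma sum_apply: "sum f A p = (\<Sum>a\<in>A. f a p)"
  by (induction A rule: infinite_finite_induct) auto

definition Fn :: "nat \<Rightarrow> (nat \<Rightarrow> 'a::field) set" where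
  "Fn n = {c. \<forall>i\<ge>n. c i = 0}"

definition unit_vec :: "nat \<Rightarrow> nat \<Rightarrow> 'a::field" where
  "unit_vec i = (\<lambda>p. if p = i then 1 else 0)"

lemma subspace_Fn: "V.subspace (Fn n)"
  by (auto simp: V.subspace_def Fn_def fscale_def)

lemma inj_unit_vec: "inj (unit_vec :: nat \<Rightarrow> nat \<Rightarrow> 'a::field)"
  by (auto simp: inj_def unit_vec_def fun_eq_iff split: if_splits)

lemma sum_scaled_unit_vecs: "(\<Sum>i<n. fscale (c i) (unit_vec i)) p = (if p < n then c p else 0)"
  by (simp add: sum_apply fscale_def unit_vec_def if_distrib[of "(*) _"] sum.If_cases[of _ "\<lambda>i. p = i"])

lemma Fn_subset_span_unit_vecs: "Fn n \<subseteq> V.span (unit_vec ` {..<n})"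
proof
  fix c :: "nat \<Rightarrow> 'a" assume "c \<in> Fn n"
  then have "c = (\<Sum>i<n. fscale (c i) (unit_vec i))"
    by (auto simp: fun_eq_iff sum_scaled_unit_vecs Fn_def)
  also have "\<dots> \<in> V.span (unit_vec ` {..<n})"
    by (intro V.span_sum V.span_scale V.span_base) auto
  finally show "c \<in> V.span (unit_vec ` {..<n})" .
qed

lemma independent_unit_vecs: "V.independent (unit_vec ` {..<n} :: (nat \<Rightarrow> 'a::field) set)"
proof (rule V.independent_if_scalars_zero)
  fix f :: "(nat \<Rightarrow> 'a) \<Rightarrow> 'a" and x :: "nat \<Rightarrow> 'a"
  assume zero: "(\<Sum>x\<in>unit_vec ` {..<n}. fscale (f x) x) = 0" and "x \<in> unit_vec ` {..<n}"
  then obtain i where i: "i < n" "x = unit_vec i" by auto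
  have "(\<Sum>x\<in>unit_vec ` {..<n}. fscale (f x) x) = (\<Sum>j<n. fscale (f (unit_vec j)) (unit_vec j))"
    by (rule sum.reindex[unfolded comp_def]) (auto intro: inj_on_subset[OF inj_unit_vec])
  then show "f x = 0"
    using fun_cong[OF zero, of i] i by (simp add: sum_scaled_unit_vecs)
qed auto

lemma dim_Fn: "V.dim (Fn n :: (nat \<Rightarrow> 'a::field) set) = n"
proof -
  have "V.dim (Fn n :: (nat \<Rightarrow> 'a) set) = card (unit_vec ` {..<n} :: (nat \<Rightarrow> 'a) set)"
    using independent_unit_vecs Fn_subset_span_unit_vecs
    by (intro V.basis_card_eq_dim[symmetric]) (auto simp: Fn_def unit_vec_def)
  also have "\<dots> = n"
    by (simp add: card_image inj_on_subset[OF inj_unit_vec])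
  finally show ?thesis .
qed

lemma basis_of_subset_Fn:
  assumes "W \<subseteq> Fn n"
  obtains B where "finite B" "B \<subseteq> W" "V.independent B" "W \<subseteq> V.span B" "card B = V.dim W"
proof -
  obtain B where B: "B \<subseteq> W" "V.independent B" "W \<subseteq> V.span B" "card B = V.dim W"
    using V.basis_exists by blast
  moreover have "finite B"
    using V.independent_span_bound[OF _ B(2)] B(1) assms Fn_subset_span_unit_vecs by blast
  ultimately show ?thesis using that by blast
qed

lemma dim_eq_0_if_subset_zero: "W \<subseteq> {0} \<Longrightarrow> V.dim (W :: (nat \<Rightarrow> 'a::field) set) = 0"
  using V.dim_le_card[of W "{}"] by simp

(* Local, because as global simp rules the field-over-itself laws would reassociate
   every product of scalars. *)
context
begin

interpretation scalars: vector_space "(*) :: 'a::field \<Rightarrow> 'a \<Rightarrow> 'a"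
  by unfold_locales (auto simp: algebra_simps)

interpretation VF: vector_space_pair "fscale :: 'a::field \<Rightarrow> (nat \<Rightarrow> 'a) \<Rightarrow> (nat \<Rightarrow> 'a)" "(*)"
  by unfold_locales

definition dot :: "nat \<Rightarrow> (nat \<Rightarrow> 'a::field) \<Rightarrow> (nat \<Rightarrow> 'a) \<Rightarrow> 'a" where
  "dot n h c = (\<Sum>i<n. h i * c i)"

lemma linear_dot: "Vector_Spaces.linear fscale (*) (dot n h)"
proof -
  have "dot n h (fscale a x) = a * dot n h x" for a x
    unfolding dot_def fscale_def sum_distrib_left by (rule sum.cong) simp_all
  moreover have "dot n h (x + y) = dot n h x + dot n h y" for x y
    by (simp add: dot_def distrib_left sum.distrib)
  ultimately show ?thesis
    by (simp add: Vector_Spaces.linear_iff V.vector_space_axioms scalars.vector_space_axioms)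
qed

lemma linear_eval: "Vector_Spaces.linear fscale (*) (\<lambda>c. c p)"
  unfolding Vector_Spaces.linear_iff
  by (simp add: V.vector_space_axioms scalars.vector_space_axioms fscale_def)

lemma dim_le_dim_kernel_Suc:
  fixes \<phi> :: "(nat \<Rightarrow> 'a::field) \<Rightarrow> 'a"
  assumes lin: "Vector_Spaces.linear fscale (*) \<phi>" and W: "V.subspace W" "W \<subseteq> Fn n"
  shows "V.dim W \<le> Suc (V.dim {c\<in>W. \<phi> c = 0})"
proof (cases "W \<subseteq> {c. \<phi> c = 0}")
  case True
  then have "{c\<in>W. \<phi> c = 0} = W" by blast
  then show ?thesis by simp
next
  case False
  then obtain b where b: "b \<in> W" "\<phi> b \<noteq> 0" by auto
  have "{c\<in>W. \<phi> c = 0} \<subseteq> Fn n" using W(2) by blast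
  then obtain B where B: "finite B" "B \<subseteq> {c\<in>W. \<phi> c = 0}" "V.independent B"
      "{c\<in>W. \<phi> c = 0} \<subseteq> V.span B" "card B = V.dim {c\<in>W. \<phi> c = 0}"
    by (rule basis_of_subset_Fn)
  have "W \<subseteq> V.span (insert b B)"
  proof
    fix x assume x: "x \<in> W"
    let ?y = "x - fscale (\<phi> x / \<phi> b) b"
    have "?y \<in> W" using x b W(1) by (intro V.subspace_diff V.subspace_scale) auto
    moreover have "\<phi> ?y = 0"
      using b by (simp add: VF.linear_diff[OF lin] VF.linear_scale[OF lin])
    ultimately have "?y \<in> V.span (insert b B)"
      using B(4) V.span_mono[of B "insert b B"] by blast
    moreover have "fscale (\<phi> x / \<phi> b) b \<in> V.span (insert b B)"
      by (intro V.span_scale V.span_base) simp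
    ultimately have "?y + fscale (\<phi> x / \<phi> b) b \<in> V.span (insert b B)"
      by (rule V.span_add)
    then show "x \<in> V.span (insert b B)" by simp
  qed
  then have "V.dim W \<le> card (insert b B)" using B(1) by (intro V.dim_le_card) auto
  also have "\<dots> \<le> Suc (card B)" using B(1) by (simp add: card_insert_if)
  finally show ?thesis using B(5) by simp
qed

lemma subspace_common_kernel:
  assumes "\<forall>\<phi>\<in>\<Phi>. Vector_Spaces.linear fscale (*) \<phi>" "V.subspace W"
  shows "V.subspace {c\<in>W. \<forall>\<phi>\<in>\<Phi>. \<phi> c = (0::'a::field)}"
  using assms unfolding V.subspace_def
  by (auto simp: VF.linear_0 VF.linear_add VF.linear_scale)

lemma dim_le_dim_kernels_plus_card:
  fixes \<Phi> :: "((nat \<Rightarrow> 'a::field) \<Rightarrow> 'a) set"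
  assumes "finite \<Phi>" "\<forall>\<phi>\<in>\<Phi>. Vector_Spaces.linear fscale (*) \<phi>" "V.subspace W" "W \<subseteq> Fn n"
  shows "V.dim W \<le> V.dim {c\<in>W. \<forall>\<phi>\<in>\<Phi>. \<phi> c = 0} + card \<Phi>"
  using assms(1,2)
proof (induction \<Phi> rule: finite_induct)
  case empty
  then show ?case by simp
next
  case (insert \<phi> \<Phi>)
  let ?U = "{c\<in>W. \<forall>\<psi>\<in>\<Phi>. \<psi> c = 0}"
  have "V.dim ?U \<le> Suc (V.dim {c\<in>?U. \<phi> c = 0})"
    using insert.prems assms(3,4) by (intro dim_le_dim_kernel_Suc subspace_common_kernel) auto
  moreover have "{c\<in>?U. \<phi> c = 0} = {c\<in>W. \<forall>\<psi>\<in>insert \<phi> \<Phi>. \<psi> c = 0}" by auto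
  ultimately show ?case using insert by simp
qed

lemma dim_le_dim_vanishing_plus_card:
  assumes "finite I" "V.subspace W" "W \<subseteq> Fn n"
  shows "V.dim W \<le> V.dim {c\<in>W. \<forall>p\<in>I. c p = (0::'a::field)} + card I"
proof -
  let ?\<Phi> = "(\<lambda>p (c :: nat \<Rightarrow> 'a). c p) ` I"
  have "V.dim W \<le> V.dim {c\<in>W. \<forall>\<phi>\<in>?\<Phi>. \<phi> c = 0} + card ?\<Phi>"
    by (rule dim_le_dim_kernels_plus_card) (use assms linear_eval in auto)
  also have "card ?\<Phi> \<le> card I"
    using assms(1) by (rule card_image_le)
  finally show ?thesis by simp
qed

definition annihilator :: "nat \<Rightarrow> (nat \<Rightarrow> 'a::field) set \<Rightarrow> (nat \<Rightarrow> 'a) set" where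
  "annihilator n S = {c\<in>Fn n. \<forall>h\<in>S. dot n h c = 0}"

lemma code_of_eq_annihilator: "code_of n H = annihilator n (set H)"
  by (auto simp: code_of_def annihilator_def Fn_def dot_def)

lemma dot_commute: "dot n h c = dot n c h"
  by (simp add: dot_def mult.commute)

lemma subspace_annihilator: "V.subspace (annihilator n S)"
proof -
  have "V.subspace {c\<in>Fn n. \<forall>\<phi>\<in>dot n ` S. \<phi> c = 0}"
    by (rule subspace_common_kernel) (auto simp: linear_dot subspace_Fn)
  then show ?thesis by (simp add: annihilator_def)
qed

lemma annihilator_span_basis:
  assumes "B \<subseteq> S" "S \<subseteq> V.span B"
  shows "annihilator n B = annihilator n S"
proof
  show "annihilator n S \<subseteq> annihilator n B"
    using assms(1) by (auto simp: annihilator_def)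
next
  show "annihilator n B \<subseteq> annihilator n S"
  proof
    fix c assume c: "c \<in> annihilator n B"
    have "V.span B \<subseteq> {h. dot n c h = 0}"
      using c by (intro V.span_minimal VF.linear_subspace_kernel[OF linear_dot])
        (auto simp: annihilator_def dot_commute)
    then show "c \<in> annihilator n S"
      using c assms(2) by (auto simp: annihilator_def dot_commute)
  qed
qed

end

lemma dim_annihilator_plus_dim:
  assumes "S \<subseteq> Fn n"
  shows "n \<le> V.dim (annihilator n S) + V.dim S"
proof -
  obtain B where B: "finite B" "B \<subseteq> S" "V.independent B" "S \<subseteq> V.span B" "card B = V.dim S"
    using assms by (rule basis_of_subset_Fn)
  have "n = V.dim (Fn n :: (nat \<Rightarrow> 'a) set)" by (simp add: dim_Fn)
  also have "\<dots> \<le> V.dim {c\<in>Fn n. \<forall>\<phi>\<in>dot n ` B. \<phi> c = 0} + card (dot n ` B)"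
    using B(1) linear_dot subspace_Fn by (intro dim_le_dim_kernels_plus_card) auto
  also have "{c\<in>Fn n. \<forall>\<phi>\<in>dot n ` B. \<phi> c = 0} = annihilator n S"
    using annihilator_span_basis[OF B(2,4)] by (auto simp: annihilator_def)
  also have "card (dot n ` B) \<le> V.dim S"
    using card_image_le[OF B(1), of "dot n"] B(5) by simp
  finally show ?thesis by simp
qed

section \<open>Primitive elements and Vandermonde systems\<close>

lemma card_nonzero: "card {x::'a::{finite,field}. x \<noteq> 0} = CARD('a) - 1"
proof -
  have "{x::'a. x \<noteq> 0} = UNIV - {0}" by auto
  then show ?thesis by (simp add: card_Diff_singleton)
qed

lemma power_card_minus_one_eq_1:
  fixes x :: "'a::{finite,field}"
  assumes "x \<noteq> 0"
  shows "x ^ (CARD('a) - 1) = 1"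
proof -
  let ?U = "{y::'a. y \<noteq> 0}"
  have "bij_betw ((*) x) ?U ?U"
    using assms by (intro bij_betw_byWitness[where f' = "(*) (inverse x)"]) auto
  then have "(\<Prod>y\<in>?U. x * y) = \<Prod>?U"
    by (rule prod.reindex_bij_betw)
  then have "x ^ card ?U * \<Prod>?U = 1 * \<Prod>?U"
    by (simp add: prod.distrib)
  moreover have "\<Prod>?U \<noteq> 0" by simp
  ultimately show ?thesis
    unfolding card_nonzero by (rule mult_right_cancel[THEN iffD1, rotated])
qed

lemma primitive_elem_nonzero:
  assumes "primitive_elem (w::'a::{finite,field})" "2 < CARD('a)"
  shows "w \<noteq> 0"
proof
  assume "w = 0"
  with assms(1) have "{x::'a. x \<noteq> 0} \<subseteq> {1}"
    by (auto simp: primitive_elem_def power_0_left split: if_splits)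
  then have "card {x::'a. x \<noteq> 0} \<le> 1"
    using card_mono[of "{1::'a}"] by fastforce
  with assms(2) show False by (simp add: card_nonzero)
qed

lemma primitive_elem_inj_on_powers:
  assumes "primitive_elem (w::'a::{finite,field})" "w \<noteq> 0"
  shows "inj_on (\<lambda>e. w ^ e) {..<CARD('a) - 1}"
proof (rule eq_card_imp_inj_on)
  let ?q = "CARD('a) - 1"
  have "{x::'a. x \<noteq> 0} \<subseteq> (\<lambda>e. w ^ e) ` {..<?q}"
  proof
    fix x :: 'a assume "x \<in> {x. x \<noteq> 0}"
    then obtain i where i: "x = w ^ i"
      using assms(1) by (auto simp: primitive_elem_def)
    have "0 < ?q" using assms(2) card_nonzero[where 'a='a] card_gt_0_iff by fastforce
    moreover have "w ^ i = (w ^ ?q) ^ (i div ?q) * w ^ (i mod ?q)"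
      by (simp flip: power_mult power_add)
    ultimately show "x \<in> (\<lambda>e. w ^ e) ` {..<?q}"
      using i power_card_minus_one_eq_1[OF assms(2)] by auto
  qed
  then have "?q \<le> card ((\<lambda>e. w ^ e) ` {..<?q})"
    using card_mono[OF finite] card_nonzero[where 'a='a] by metis
  then show "card ((\<lambda>e. w ^ e) ` {..<?q}) = card {..<?q}"
    using card_image_le[of "{..<?q}" "\<lambda>e. w ^ e"] by simp
qed simp

text \<open>Pair \<open>c\<close> with the polynomial of degree at most \<open>t\<close> vanishing at the other nodes of
  its support.\<close>
lemma vanishing_moments_imp_zero:
  fixes c x :: "nat \<Rightarrow> 'a::field"
  assumes inj: "inj_on x {..<n}"
    and moments: "\<And>j. j \<le> t \<Longrightarrow> (\<Sum>p<n. c p * x p ^ j) = 0"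
    and support: "card {p. p < n \<and> c p \<noteq> 0} \<le> t + 1"
    and "p0 < n"
  shows "c p0 = 0"
proof (rule ccontr)
  assume "c p0 \<noteq> 0"
  define S where "S = {p. p < n \<and> c p \<noteq> 0}"
  have S: "finite S" "p0 \<in> S" using \<open>c p0 \<noteq> 0\<close> \<open>p0 < n\<close> by (auto simp: S_def)
  define f where "f = (\<Prod>q\<in>S - {p0}. [:- x q, 1:])"
  have poly_f: "poly f y = (\<Prod>q\<in>S - {p0}. y - x q)" for y
    by (simp add: f_def poly_prod)
  have "degree f = card (S - {p0})"
    unfolding f_def by (subst degree_prod_eq_sum_degree) auto
  then have deg: "degree f \<le> t"
    using support S by (simp add: S_def[symmetric])
  have "(\<Sum>p<n. c p * poly f (x p)) = (\<Sum>p<n. \<Sum>j\<le>degree f. c p * (coeff f j * x p ^ j))"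
    by (simp add: poly_altdef sum_distrib_left)
  also have "\<dots> = (\<Sum>j\<le>degree f. \<Sum>p<n. coeff f j * (c p * x p ^ j))"
    by (subst sum.swap) (simp add: mult.left_commute)
  also have "\<dots> = (\<Sum>j\<le>degree f. coeff f j * (\<Sum>p<n. c p * x p ^ j))"
    by (simp add: sum_distrib_left)
  also have "\<dots> = 0" using moments deg by simp
  finally have "(\<Sum>p<n. c p * poly f (x p)) = 0" .
  moreover have "(\<Sum>p<n. c p * poly f (x p)) = (\<Sum>p\<in>S. c p * poly f (x p))"
    by (rule sum.mono_neutral_right) (auto simp: S_def)
  moreover have "(\<Sum>p\<in>S. c p * poly f (x p)) = c p0 * poly f (x p0)"
    using S by (subst sum.remove[of S p0]) (auto intro!: sum.neutral simp: poly_f)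
  moreover have "poly f (x p0) \<noteq> 0"
    using S inj \<open>p0 < n\<close> by (auto simp: poly_f S_def inj_on_def)
  ultimately show False using \<open>c p0 \<noteq> 0\<close> by simp
qed

section \<open>Blocks of coordinates\<close>

definition block :: "nat \<Rightarrow> nat \<Rightarrow> nat set" where
  "block r b = {b*(r+1)..b*(r+1)+r}"

lemma card_block: "card (block r b) = r + 1"
  by (simp add: block_def)

lemma mem_block_div: "i \<in> block r (i div (r+1))"
proof -
  have "i mod (r+1) \<le> r" using mod_less_divisor[of "r+1" i] by linarith
  then show ?thesis
    using div_mult_mod_eq[of i "r+1"] unfolding block_def atLeastAtMost_iff by linarith
qed

lemma div_eq_if_mem_block:
  assumes "p \<in> block r b"
  shows "p div (r+1) = b"
proof -
  have "b*(r+1) \<le> p" "p \<le> b*(r+1) + r" using assms by (auto simp: block_def)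
  then show ?thesis by (intro div_nat_eqI) (auto simp: algebra_simps)
qed

lemma block_subset: "b < N \<Longrightarrow> block r b \<subseteq> {..<N*(r+1)}"
  using mult_le_mono1[of "Suc b" N "r+1"] by (auto simp: block_def)

lemma sum_blocks: "(\<Sum>b<N. sum g (block r b)) = sum g {..<N*(r+1)}"
proof -
  have "block r b = {b*(r+1)..<b*(r+1)+(r+1)}" for b by (auto simp: block_def)
  then show ?thesis by (simp only: sum.nat_group)
qed

lemma coord_eq_neg_sum_block:
  assumes "sum c (block r (i div (r+1))) = (0::'a::ab_group_add)"
  shows "c i = - (\<Sum>j\<in>block r (i div (r+1)) - {i}. c j)"
  using assms mem_block_div[of i r] by (simp add: sum.remove[of _ i] block_def eq_neg_iff_add_eq_0)

lemma repair_if_block_sums_zero: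
  fixes C :: "(nat \<Rightarrow> 'a::ab_group_add) set"
  assumes "\<forall>c\<in>C. \<forall>b<N. sum c (block r b) = 0"
  shows "addition_based_repair (N*(r+1)) C" "all_symbol_locality (N*(r+1)) r C"
proof -
  let ?R = "\<lambda>i. block r (i div (r+1)) - {i}"
  have R: "?R i \<subseteq> {..<N*(r+1)} - {i}" "card (?R i) = r"
    and repair: "\<forall>c\<in>C. c i = - sum c (?R i)" if "i < N*(r+1)" for i
  proof -
    have b: "i div (r+1) < N" using that by (simp add: less_mult_imp_div_less)
    show "?R i \<subseteq> {..<N*(r+1)} - {i}" using block_subset[OF b] by (rule Diff_mono) simp
    show "\<forall>c\<in>C. c i = - sum c (?R i)"
      using assms b by (blast intro: coord_eq_neg_sum_block)
    show "card (?R i) = r" using mem_block_div[of i r] by (simp add: card_block)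
  qed
  show "addition_based_repair (N*(r+1)) C"
    unfolding addition_based_repair_def
  proof (intro allI impI)
    fix i assume i: "i < N*(r+1)"
    show "\<exists>J. J \<subseteq> {..<N*(r+1)} - {i} \<and> (\<forall>c\<in>C. c i = - sum c J)"
      using R(1)[OF i] repair[OF i] by blast
  qed
  show "all_symbol_locality (N*(r+1)) r C"
    unfolding all_symbol_locality_def
  proof (intro allI impI)
    fix i assume i: "i < N*(r+1)"
    have "\<forall>c\<in>C. c i = - sum (\<lambda>j. if j \<in> ?R i then c j else 0) (?R i)"
      using repair[OF i] by simp
    with R[OF i] show "\<exists>R f. R \<subseteq> {..<N*(r+1)} - {i} \<and> card R \<le> r \<and>
        (\<forall>c\<in>C. c i = f (\<lambda>j. if j \<in> R then c j else 0))"
      by (intro exI[of _ "?R i"] exI[of _ "\<lambda>v. - sum v (?R i)"] conjI) simp_all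
  qed
qed

lemma card_last_positions: "card {p. p < B \<and> p mod (r+1) = r} = B div (r+1)"
proof -
  have lt_div: "b < B div (r+1) \<longleftrightarrow> b*(r+1) + r < B" for b
    using less_eq_div_iff_mult_less_eq[of "r+1" "Suc b" B] by (auto simp: Suc_le_eq)
  have "{p. p < B \<and> p mod (r+1) = r} = (\<lambda>b. b*(r+1) + r) ` {..<B div (r+1)}"
  proof (intro equalityI subsetI)
    fix p assume "p \<in> {p. p < B \<and> p mod (r+1) = r}"
    then have "p < B" "p mod (r+1) = r" by auto
    then have p: "p < B" "p = (p div (r+1))*(r+1) + r"
      using div_mult_mod_eq[of p "r+1"] by simp_all
    then have "p div (r+1) < B div (r+1)" by (subst lt_div) linarith
    with p(2) show "p \<in> (\<lambda>b. b*(r+1) + r) ` {..<B div (r+1)}" by blast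
  next
    fix p assume "p \<in> (\<lambda>b. b*(r+1) + r) ` {..<B div (r+1)}"
    then obtain b where "b < B div (r+1)" "p = b*(r+1) + r" by blast
    moreover have "(b*(r+1) + r) mod (r+1) = r" unfolding mod_mult_self3 by simp
    ultimately show "p \<in> {p. p < B \<and> p mod (r+1) = r}" using lt_div[of b] by simp
  qed
  moreover have "inj_on (\<lambda>b. b*(r+1) + r) {..<B div (r+1)}"
    by (intro inj_onI) (metis add_right_cancel mult_right_cancel add_eq_0_iff_both_eq_0 one_neq_zero)
  ultimately show ?thesis by (simp add: card_image)
qed

lemma card_nonlast_positions: "card {p. p < B \<and> p mod (r+1) \<noteq> r} = B - B div (r+1)"
proof -
  have "{p. p < B \<and> p mod (r+1) \<noteq> r} = {..<B} - {p. p < B \<and> p mod (r+1) = r}" by auto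
  also have "card \<dots> = B - card {p. p < B \<and> p mod (r+1) = r}"
    by (subst card_Diff_subset) auto
  finally show ?thesis by (simp only: card_last_positions)
qed

lemma length_filter_not_dvd: "length (filter (\<lambda>j. \<not> (r+1) dvd j) [1..<l*(r+1)]) = l * r"
proof -
  let ?P = "\<lambda>j. \<not> (r+1) dvd j"
  have "set (filter ?P [1..<l*(r+1)]) = {..<l*(r+1)} - (\<lambda>i. i*(r+1)) ` {..<l}"
  proof (intro equalityI subsetI)
    fix x assume "x \<in> set (filter ?P [1..<l*(r+1)])"
    then have "x < l*(r+1)" "\<not> (r+1) dvd x" by auto
    then show "x \<in> {..<l*(r+1)} - (\<lambda>i. i*(r+1)) ` {..<l}"
      using dvd_triv_right[of "r+1"] by blast
  next
    fix x assume x: "x \<in> {..<l*(r+1)} - (\<lambda>i. i*(r+1)) ` {..<l}"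
    have "?P x"
    proof
      assume "(r+1) dvd x"
      then obtain i where i: "x = i*(r+1)" by (metis dvdE mult.commute)
      with x have "i < l" by (metis DiffE lessThan_iff mult_less_cancel2)
      with i x show False by blast
    qed
    with x show "x \<in> set (filter ?P [1..<l*(r+1)])" by (cases x) auto
  qed
  moreover have "(\<lambda>i. i*(r+1)) ` {..<l} \<subseteq> {..<l*(r+1)}"
    by (simp only: image_subset_iff lessThan_iff mult_less_cancel2) simp
  moreover have "inj_on (\<lambda>i. i*(r+1)) {..<l}"
    by (intro inj_onI) (metis mult_right_cancel add_eq_0_iff_both_eq_0 one_neq_zero)
  then have "card ((\<lambda>i. i*(r+1)) ` {..<l}) = l" by (simp add: card_image)
  ultimately have "card (set (filter ?P [1..<l*(r+1)])) = l * r"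
    by (simp add: card_Diff_subset algebra_simps)
  then show ?thesis by (metis distinct_card distinct_filter distinct_upt)
qed

lemma hweight_le_if_vanishing_below:
  assumes "\<forall>p<B. c p = 0"
  shows "hweight n c \<le> n - B"
proof -
  have "{p. p < n \<and> c p \<noteq> 0} \<subseteq> {B..<n}" using assms by (auto simp: not_less[symmetric])
  then show ?thesis unfolding hweight_def using card_mono[of "{B..<n}"] by fastforce
qed

lemma min_dist_eqI:
  assumes "\<forall>c\<in>C. c \<noteq> 0 \<longrightarrow> d \<le> hweight n c" "c0 \<in> C" "c0 \<noteq> 0" "hweight n c0 \<le> d"
  shows "min_dist n C = d"
  unfolding min_dist_def
proof (rule Min_eqI)
  have "{hweight n c | c. c \<in> C \<and> c \<noteq> 0} \<subseteq> {..n}"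
    using hweight_le_if_vanishing_below[of 0 _ n] by auto
  then show "finite {hweight n c | c. c \<in> C \<and> c \<noteq> 0}"
    by (rule finite_subset) simp
  show "d \<le> y" if "y \<in> {hweight n c | c. c \<in> C \<and> c \<noteq> 0}" for y
    using that assms(1) by blast
  have "hweight n c0 = d" using assms by (intro antisym) auto
  then show "d \<in> {hweight n c | c. c \<in> C \<and> c \<noteq> 0}"
    using assms(2,3) by blast
qed

section \<open>The locally repairable code\<close>

locale lrc_code =
  fixes w :: "'a::{finite,field}" and n k r l m :: nat and \<alpha> :: 'a
  assumes n_le_card: "n \<le> CARD('a) - 1"
    and r_pos: "0 < r" and r_less_k: "r < k" and r_dvd_k: "r dvd k"
    and Suc_r_dvd_card: "(r+1) dvd (CARD('a) - 1)"
    and n_eq: "n = (m + l) * (r+1)" and m_def: "m = k div r"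
    and primitive: "primitive_elem w"
    and alpha_def: "\<alpha> = w ^ ((CARD('a) - 1) div (r+1))"
begin

abbreviation H :: "(nat \<Rightarrow> 'a) list" where
  "H \<equiv> Hrows w \<alpha> r n m l"

abbreviation code :: "(nat \<Rightarrow> 'a) set" where
  "code \<equiv> code_of n H"

definition point :: "nat \<Rightarrow> 'a" where
  "point p = w ^ (p div (r+1)) * \<alpha> ^ (p mod (r+1))"

lemma k_eq: "k = m * r"
  using r_dvd_k by (simp add: m_def)

lemma two_le_m: "2 \<le> m"
  using r_less_k mult_le_mono1[of m 1 r] by (auto simp: k_eq)

lemma n_eq_k_plus_rows: "n = k + (m + l + l*r)"
  unfolding n_eq k_eq by (simp add: distrib_left distrib_right)

lemma w_nonzero: "w \<noteq> 0"
proof (rule primitive_elem_nonzero[OF primitive])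
  have "2 * 2 \<le> m * (r+1)" using two_le_m r_pos by (intro mult_le_mono) auto
  also have "\<dots> \<le> n" unfolding n_eq by (intro mult_le_mono1) simp
  finally show "2 < CARD('a)" using n_le_card by simp
qed

lemma alpha_pow_Suc_r: "\<alpha> ^ (r+1) = 1"
proof -
  have "\<alpha> ^ (r+1) = w ^ ((CARD('a) - 1) div (r+1) * (r+1))"
    by (simp only: alpha_def power_mult)
  also have "(CARD('a) - 1) div (r+1) * (r+1) = CARD('a) - 1"
    using Suc_r_dvd_card by (rule dvd_div_mult_self)
  finally show ?thesis by (simp only: power_card_minus_one_eq_1[OF w_nonzero])
qed

lemma inj_on_point: "inj_on point {..<n}"
proof -
  define d where "d = (CARD('a) - 1) div (r+1)"
  define e where "e p = p div (r+1) + d * (p mod (r+1))" for p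
  have q_eq: "CARD('a) - 1 = d * (r+1)"
    unfolding d_def using Suc_r_dvd_card by (rule dvd_div_mult_self[symmetric])
  have "\<alpha> = w ^ d" by (simp only: alpha_def d_def)
  then have point_eq: "point = (\<lambda>x. w ^ x) \<circ> e"
    unfolding fun_eq_iff comp_def point_def e_def power_add power_mult by simp
  have div_less_d: "p div (r+1) < d" if "p < n" for p
  proof -
    have "p div (r+1) < m + l" using that by (simp add: n_eq less_mult_imp_div_less)
    moreover have "m + l \<le> d"
      using n_le_card unfolding q_eq n_eq by (rule mult_right_le_imp_le) simp
    ultimately show ?thesis by simp
  qed
  have e_mod: "e p mod d = p div (r+1)" and e_div: "e p div d = p mod (r+1)" if "p < n" for p
    using div_less_d[OF that] by (simp_all add: e_def)
  have "inj_on e {..<n}"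
  proof
    fix p p' assume "p \<in> {..<n}" "p' \<in> {..<n}" "e p = e p'"
    then have "p div (r+1) = p' div (r+1)" "p mod (r+1) = p' mod (r+1)"
      by (metis e_mod lessThan_iff, metis e_div lessThan_iff)
    then show "p = p'" by (metis div_mult_mod_eq)
  qed
  moreover have "e ` {..<n} \<subseteq> {..<CARD('a) - 1}"
  proof
    fix x assume "x \<in> e ` {..<n}"
    then obtain p where p: "p < n" "x = e p" by blast
    have "d * (p mod (r+1)) \<le> d * r"
      using mod_less_divisor[of "r+1" p] by (intro mult_le_mono2) linarith
    moreover have "d * (r+1) = d + d * r" by simp
    ultimately show "x \<in> {..<CARD('a) - 1}"
      using div_less_d[OF p(1)] unfolding p(2) e_def q_eq lessThan_iff by linarith
  qed
  ultimately show ?thesis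
    unfolding point_eq
    using primitive_elem_inj_on_powers[OF primitive w_nonzero]
    by (intro comp_inj_on) (auto intro: inj_on_subset)
qed

lemma code_subset_Fn: "code \<subseteq> Fn n"
  by (simp add: code_of_eq_annihilator annihilator_def)

lemma subspace_code: "V.subspace code"
  by (simp add: code_of_eq_annihilator subspace_annihilator)

lemma dot_erow:
  assumes "b < m + l"
  shows "dot n (erow r n b) c = sum c (block r b)"
proof -
  have "dot n (erow r n b) c = (\<Sum>p<n. if p \<in> block r b then c p else 0)"
    unfolding dot_def erow_def block_def by (rule sum.cong) auto
  also have "\<dots> = sum c (block r b)"
    using block_subset[OF assms, of r] by (simp add: sum.If_cases Int_absorb1 n_eq)
  finally show ?thesis .
qed

lemma block_sum_code:
  assumes "c \<in> code" "b < m + l"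
  shows "sum c (block r b) = 0"
proof -
  have "erow r n b \<in> set H" using assms(2) by (simp add: Hrows_def)
  with assms show ?thesis by (simp add: code_of_eq_annihilator annihilator_def flip: dot_erow)
qed

lemma dot_Vrow: "dot n (Vrow w \<alpha> r n j) c = (\<Sum>p<n. c p * point p ^ j)"
  by (simp add: dot_def Vrow_def point_def mult.commute)

lemma moment_code:
  assumes c: "c \<in> code" and j: "j \<le> l*(r+1)"
  shows "(\<Sum>p<n. c p * point p ^ j) = 0"
proof (cases "(r+1) dvd j")
  case False
  then have "0 < j" "j < l*(r+1)"
    using j by (metis dvd_0_right gr0I, metis dvd_triv_right le_neq_implies_less)
  with False have "Vrow w \<alpha> r n j \<in> set H" by (simp add: Hrows_def)
  with c show ?thesis by (simp add: code_of_eq_annihilator annihilator_def flip: dot_Vrow)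
next
  case True
  then obtain i where i: "j = (r+1) * i" by blast
  have point_pow: "point p ^ j = w ^ (p div (r+1) * j)" for p
  proof -
    have "point p ^ j = (w ^ (p div (r+1))) ^ j * ((\<alpha> ^ (r+1)) ^ i) ^ (p mod (r+1))"
      unfolding point_def i
      by (simp only: power_mult_distrib power_mult[symmetric] mult.commute mult.left_commute)
    then show ?thesis by (simp only: alpha_pow_Suc_r power_one mult_1_right power_mult)
  qed
  have "(\<Sum>p<n. c p * point p ^ j) = (\<Sum>b<m+l. \<Sum>p\<in>block r b. c p * w ^ (p div (r+1) * j))"
    by (simp add: n_eq sum_blocks point_pow)
  also have "\<dots> = (\<Sum>b<m+l. w ^ (b * j) * sum c (block r b))"
  proof (rule sum.cong[OF refl])
    fix b
    have "(\<Sum>p\<in>block r b. c p * w ^ (p div (r+1) * j)) = (\<Sum>p\<in>block r b. c p * w ^ (b * j))"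
      by (rule sum.cong) (simp_all only: div_eq_if_mem_block)
    then show "(\<Sum>p\<in>block r b. c p * w ^ (p div (r+1) * j)) = w ^ (b * j) * sum c (block r b)"
      by (simp add: sum_distrib_right mult.commute)
  qed
  also have "\<dots> = 0" using block_sum_code[OF c] by simp
  finally show ?thesis .
qed

lemma rows_subset_Fn: "set H \<subseteq> Fn n"
  by (auto simp: Hrows_def Fn_def erow_def Vrow_def)

lemma length_rows: "length H = m + l + l*r"
  using length_filter_not_dvd[of r l] by (simp add: Hrows_def)

lemma hweight_code_ge:
  assumes "c \<in> code" "c \<noteq> 0"
  shows "l*(r+1) + 2 \<le> hweight n c"
proof (rule ccontr)
  assume "\<not> l*(r+1) + 2 \<le> hweight n c"
  then have "card {p. p < n \<and> c p \<noteq> 0} \<le> l*(r+1) + 1" by (simp add: hweight_def)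
  then have "c p = 0" if "p < n" for p
    using vanishing_moments_imp_zero[OF inj_on_point moment_code[OF assms(1)]] that by blast
  moreover have "c p = 0" if "n \<le> p" for p
    using assms(1) code_subset_Fn that by (auto simp: Fn_def)
  ultimately have "c = 0" by (metis not_le zero_fun_apply ext)
  with assms(2) show False ..
qed

lemma code_vanishes_below:
  assumes c: "c \<in> code" and "B \<le> n"
    and nonlast: "\<forall>p<B. p mod (r+1) \<noteq> r \<longrightarrow> c p = 0" and "p < B"
  shows "c p = 0"
proof (cases "p mod (r+1) = r")
  case False
  with nonlast \<open>p < B\<close> show ?thesis by blast
next
  case True
  define b where "b = p div (r+1)"
  have "b < m + l"
    using \<open>p < B\<close> \<open>B \<le> n\<close> by (simp add: b_def n_eq less_mult_imp_div_less)
  have p: "p \<in> block r b" unfolding b_def by (rule mem_block_div)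
  have "c q = 0" if q: "q \<in> block r b - {p}" for q
  proof -
    have "q div (r+1) = p div (r+1)"
      using q p div_eq_if_mem_block by blast
    then have "q mod (r+1) \<noteq> r"
      using q True div_mult_mod_eq[of q "r+1"] div_mult_mod_eq[of p "r+1"] by auto
    moreover have "q < B"
      using q p \<open>p < B\<close> True div_mult_mod_eq[of p "r+1"] by (auto simp: block_def b_def)
    ultimately show ?thesis using nonlast by blast
  qed
  then have "sum c (block r b) = c p"
    using p by (simp add: sum.remove[of _ p] block_def sum.neutral)
  with block_sum_code[OF c \<open>b < m + l\<close>] show ?thesis by simp
qed

lemma dim_code_le_dim_vanishing:
  assumes "B \<le> n"
  shows "V.dim code \<le> V.dim {c\<in>code. \<forall>p<B. c p = 0} + (B - B div (r+1))"
proof -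
  let ?I = "{p. p < B \<and> p mod (r+1) \<noteq> r}"
  have "V.dim code \<le> V.dim {c\<in>code. \<forall>p\<in>?I. c p = 0} + card ?I"
    using subspace_code code_subset_Fn by (intro dim_le_dim_vanishing_plus_card) simp_all
  also have "{c\<in>code. \<forall>p\<in>?I. c p = 0} = {c\<in>code. \<forall>p<B. c p = 0}"
    using code_vanishes_below[OF _ assms] by auto
  also have "card ?I = B - B div (r+1)" by (rule card_nonlast_positions)
  finally show ?thesis .
qed

lemma dim_code_le: "V.dim code \<le> k"
proof -
  have "{c\<in>code. \<forall>p<m*(r+1). c p = 0} \<subseteq> {0}"
  proof
    fix c assume c: "c \<in> {c\<in>code. \<forall>p<m*(r+1). c p = 0}"
    have "hweight n c \<le> l*(r+1)"
      using hweight_le_if_vanishing_below[of "m*(r+1)" c n] c by (simp add: n_eq algebra_simps)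
    then show "c \<in> {0}" using hweight_code_ge[of c] c by auto
  qed
  then have zero: "V.dim {c\<in>code. \<forall>p<m*(r+1). c p = 0} = 0" by (rule dim_eq_0_if_subset_zero)
  have div_eq: "m*(r+1) div (r+1) = m" by (rule nonzero_mult_div_cancel_right) simp
  have "m*(r+1) \<le> n" unfolding n_eq by (intro mult_le_mono1) simp
  from dim_code_le_dim_vanishing[OF this] have "V.dim code \<le> 0 + (m*(r+1) - m)"
    unfolding zero div_eq .
  then show ?thesis by (simp add: k_eq)
qed

lemma n_le_dim_code_plus_dim_rows: "n \<le> V.dim code + V.dim (set H)"
  unfolding code_of_eq_annihilator using rows_subset_Fn by (rule dim_annihilator_plus_dim)

lemma dim_rows_le: "V.dim (set H) \<le> m + l + l*r"
  using V.dim_le_card'[of "set H"] card_length[of H] length_rows by simp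

lemma dim_code: "V.dim code = k"
  using dim_code_le n_le_dim_code_plus_dim_rows dim_rows_le n_eq_k_plus_rows by simp

lemma dim_rows: "V.dim (set H) = m + l + l*r"
  using dim_code n_le_dim_code_plus_dim_rows dim_rows_le n_eq_k_plus_rows by simp

text \<open>Only \<open>k - 1\<close> of the first \<open>B = n - (t + 2)\<close> coordinates, \<open>t = l(r + 1)\<close>, are not
  determined by the block sums, so some nonzero codeword vanishes on all of them.\<close>
lemma min_dist_code: "min_dist n code = l*(r+1) + 2"
proof -
  define B where "B = (m - 1)*(r+1) + (r - 1)"
  obtain m' r' where m': "m = Suc (Suc m')" and r': "r = Suc r'"
    using two_le_m r_pos by (metis add_2_eq_Suc le_Suc_ex gr0_implies_Suc)
  have "B div (r+1) = m - 1" unfolding B_def by (subst div_mult_self3) simp_all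
  then have B: "n = B + (l*(r+1) + 2)" "B - B div (r+1) = k - 1"
    by (simp_all add: B_def n_eq k_eq m' r' algebra_simps)
  have "k \<le> V.dim {c\<in>code. \<forall>p<B. c p = 0} + (k - 1)"
    using dim_code_le_dim_vanishing[of B] B dim_code by simp
  then have dim_pos: "V.dim {c\<in>code. \<forall>p<B. c p = 0} \<noteq> 0" using r_less_k by linarith
  obtain c where c: "c \<in> code" "c \<noteq> 0" "\<forall>p<B. c p = 0"
  proof (rule ccontr)
    assume "\<not> thesis"
    with that have "{c\<in>code. \<forall>p<B. c p = 0} \<subseteq> {0}" by blast
    from dim_eq_0_if_subset_zero[OF this] dim_pos show False by contradiction
  qed
  then have "hweight n c \<le> l*(r+1) + 2"
    using hweight_le_if_vanishing_below[of B c n] B(1) by simp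
  then show ?thesis
    using hweight_code_ge c by (intro min_dist_eqI) auto
qed

end

theorem mainTheorem7:
  fixes w :: "'a::{finite,field}" and n k r l :: nat
  assumes "n \<le> CARD('a) - 1"
    and "0 < r" "r < k" "k \<le> n"
    and "r dvd k" "(r+1) dvd n" "(r+1) dvd (CARD('a) - 1)"
    and "n = (k div r + l) * (r+1)"
    and "primitive_elem w"
  defines "m \<equiv> k div r"
    and "\<alpha> \<equiv> w ^ ((CARD('a) - 1) div (r+1))"
  shows "length (Hrows w \<alpha> r n m l) = m + l + l*r
    \<and> vdim (set (Hrows w \<alpha> r n m l)) = m + l + l*r
    \<and> linear_code n k (n - k - m + 2) (code_of n (Hrows w \<alpha> r n m l))
    \<and> (\<forall>c\<in>code_of n (Hrows w \<alpha> r n m l). \<forall>b<m+l. (\<Sum>p\<in>{b*(r+1)..b*(r+1)+r}. c p) = 0)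
    \<and> addition_based_repair n (code_of n (Hrows w \<alpha> r n m l))
    \<and> all_symbol_locality n r (code_of n (Hrows w \<alpha> r n m l))"
proof -
  interpret lrc_code w n k r l m \<alpha>
    using assms by unfold_locales (simp_all add: m_def \<alpha>_def)
  have block_sums: "\<forall>c\<in>code. \<forall>b<m+l. sum c (block r b) = 0"
    using block_sum_code by blast
  have "n - k - m + 2 = l*(r+1) + 2"
    using n_eq_k_plus_rows by simp
  then have "linear_code n k (n - k - m + 2) code"
    unfolding linear_code_def vsubspace_def vdim_def
    using subspace_code code_subset_Fn dim_code min_dist_code by (auto simp: Fn_def)
  then show ?thesis
    using length_rows dim_rows block_sums repair_if_block_sums_zero[OF block_sums, folded n_eq]
    by (simp add: vdim_def block_def)
qed

end
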